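(* Let $K$ be a field with algebraic closure $\overline K$, let $n\ge2$ and $1\le s<n$ be integers, and let $b\ge2$ be an integer. For a degree pattern $\mathbf d=(d_1,\dots,d_s)$ with $d_1\ge\cdots\ge d_s\ge1$, $d_1\ge2$, write $\delta(\mathbf d)=d_1\cdots d_s$, $D_i(\mathbf d)=\binom{d_i+n}{n}-1$ and $\mathbb P^{\mathbf D(\mathbf d)}_{\overline K}=\mathbb P^{D_1(\mathbf d)}_{\overline K}\times\cdots\times\mathbb P^{D_s(\mathbf d)}_{\overline K}$, and let $\mathbf d^{(b)}=(b,1,\dots,1)$. Then for every degree pattern $\mathbf d\ne\mathbf d^{(b)}$ with $\delta(\mathbf d)=b$, $$\dim\mathbb P^{\mathbf D(\mathbf d^{(b)})}_{\overline K}\ge\dim\mathbb P^{\mathbf D(\mathbf d)}_{\overline K}+g(b).$$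
   Context: $g(b)=0$ if $b$ is prime; otherwise $g(b)=\binom{b+n}{n}-\binom{b/\rho+n}{n}-\binom{\rho+n}{n}$, where $\rho$ is the smallest prime dividing $b$. *)

theory Defs
  imports "HOL-Computational_Algebra.Primes"
begin

definition degree_pattern :: "nat \<Rightarrow> nat list \<Rightarrow> bool" where
  "degree_pattern s d \<longleftrightarrow> length d = s \<and> s \<ge> 1 \<and> sorted_wrt (\<ge>) d
      \<and> (\<forall>x\<in>set d. x \<ge> 1) \<and> d ! 0 \<ge> 2"

definition delta :: "nat list \<Rightarrow> nat" where
  "delta d = prod_list d"

definition Dvec :: "nat \<Rightarrow> nat list \<Rightarrow> nat list" where
  "Dvec n d = map (\<lambda>di. ((di + n) choose n) - 1) d"

definition dim_proj_product :: "nat list \<Rightarrow> nat" where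
  "dim_proj_product Ds = sum_list Ds"

definition dpat :: "nat \<Rightarrow> nat \<Rightarrow> nat list" where
  "dpat b s = b # replicate (s - 1) 1"

definition min_prime :: "nat \<Rightarrow> nat" where
  "min_prime b = Min (prime_factors b)"

definition g :: "nat \<Rightarrow> nat \<Rightarrow> int" where
  "g n b = (if prime b then 0 else
     int ((b + n) choose n) - int ((b div min_prime b + n) choose n)
       - int ((min_prime b + n) choose n))"

end

theory Submission
  imports Defs
begin

text \<open>Write \<open>C x = (x + n choose n)\<close> (\<open>monomial_count n x\<close>, the number of monomials of
  degree at most \<open>x\<close> in \<open>n\<close> variables). The dimension of the product of projective spaces
  attached to a pattern \<open>d\<close> is \<open>\<Sum> C d\<^sub>i - s\<close>, and \<open>C\<close> is convex: its increments
  \<open>(x + n choose n - 1)\<close> grow with \<open>x\<close>. Convexity gives the exchange inequality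
  \<open>C x + C y \<le> C p + C q\<close> whenever \<open>x y = p q\<close> and \<open>p \<le> x, y\<close>: spreading a factorisation
  apart can only increase \<open>\<Sum> C\<close>. A pattern \<open>d \<noteq> (b,1,\<dots>,1)\<close> with \<open>\<delta>(d) = b\<close> has
  \<open>b = d\<^sub>1 m\<close> with \<open>d\<^sub>1, m \<ge> 2\<close>, \<open>m = d\<^sub>2\<cdots>d\<^sub>s\<close>, so \<open>b\<close> is composite; collapsing \<open>d\<^sub>2,\<dots>,d\<^sub>s\<close>
  into \<open>(m,1,\<dots>,1)\<close> and then exchanging \<open>(d\<^sub>1, m)\<close> for \<open>(\<rho>, b/\<rho>)\<close> shows
  \<open>\<Sum> C d\<^sub>i \<le> C \<rho> + C (b/\<rho>) + (s - 1) C 1\<close>, which is the claim.\<close>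

definition monomial_count :: "nat \<Rightarrow> nat \<Rightarrow> nat" where
  "monomial_count n x = (x + n) choose n"

lemma monomial_count_one [simp]:
  "monomial_count n 1 = n + 1" "monomial_count n (Suc 0) = n + 1"
  by (simp_all add: monomial_count_def)

lemma monomial_count_mono: "x \<le> y \<Longrightarrow> monomial_count n x \<le> monomial_count n y"
  by (simp add: monomial_count_def binomial_right_mono)

lemma monomial_count_Suc:
  assumes "n \<ge> 1"
  shows "monomial_count n (Suc x) = monomial_count n x + ((x + n) choose (n - 1))"
proof -
  obtain k where "n = Suc k" using assms by (cases n) auto
  then show ?thesis by (simp add: monomial_count_def)
qed

lemma monomial_count_exchange:
  assumes "a \<le> y"
  shows "monomial_count n (a + t) + monomial_count n y \<le> monomial_count n a + monomial_count n (y + t)"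
proof (cases "n = 0")
  case True
  then show ?thesis by (simp add: monomial_count_def)
next
  case False
  then show ?thesis
  proof (induction t)
    case 0
    then show ?case by simp
  next
    case (Suc t)
    have "((a + t + n) choose (n - 1)) \<le> ((y + t + n) choose (n - 1))"
      using assms by (intro binomial_right_mono) simp
    with Suc show ?case by (simp add: monomial_count_Suc)
  qed
qed

lemma add_le_add_of_mult_eq:
  fixes p q x y :: nat
  assumes "0 < p" "p \<le> x" "x \<le> y" "x * y = p * q"
  shows "x + y \<le> p + q"
proof -
  have "p * x \<le> p * q"
    using assms mult_le_mono1[of p y x] by (simp add: mult.commute)
  then have "x \<le> q" using assms(1) by simp
  have "int x * (int x + int y) = int x * (int p + int q) - (int x - int p) * (int q - int x)"
    using arg_cong[OF assms(4), of int] by (simp add: algebra_simps)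
  also have "\<dots> \<le> int x * (int p + int q)"
    using assms(2) \<open>x \<le> q\<close> by (simp add: mult_nonneg_nonneg)
  finally show ?thesis using assms by simp
qed

lemma monomial_count_factor_exchange:
  assumes "0 < p" "p \<le> x" "p \<le> y" "x * y = p * q"
  shows "monomial_count n x + monomial_count n y \<le> monomial_count n p + monomial_count n q"
proof -
  have ordered: "monomial_count n x + monomial_count n y \<le> monomial_count n p + monomial_count n q"
    if "0 < p" "p \<le> x" "x \<le> y" "x * y = p * q" for x y
  proof -
    have "monomial_count n (p + (x - p)) + monomial_count n y
          \<le> monomial_count n p + monomial_count n (y + (x - p))"
      using that by (intro monomial_count_exchange) simp
    also have "\<dots> \<le> monomial_count n p + monomial_count n q"
    proof -
      have "y + (x - p) \<le> q" using add_le_add_of_mult_eq[OF that] that(2) by simp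
      then show ?thesis by (intro add_left_mono monomial_count_mono)
    qed
    finally show ?thesis using that by simp
  qed
  show ?thesis
    using ordered[of x y] ordered[of y x] assms by (cases "x \<le> y") (auto simp: mult.commute)
qed

lemma prod_list_ge_1: "\<forall>x\<in>set xs. x \<ge> 1 \<Longrightarrow> prod_list xs \<ge> (1::nat)"
  by (induction xs) (auto simp: Suc_le_eq)

lemma sum_monomial_count_le_prod:
  assumes "xs \<noteq> []" "\<forall>x\<in>set xs. x \<ge> 1"
  shows "(\<Sum>x\<leftarrow>xs. monomial_count n x)
           \<le> monomial_count n (prod_list xs) + (length xs - 1) * (n + 1)"
  using assms
proof (induction xs)
  case Nil
  then show ?case by simp
next
  case (Cons x xs)
  show ?case
  proof (cases "xs = []")
    case True
    then show ?thesis by simp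
  next
    case False
    have "prod_list xs \<ge> 1"
      using Cons.prems prod_list_ge_1 by simp
    then have exchange: "monomial_count n x + monomial_count n (prod_list xs)
        \<le> monomial_count n 1 + monomial_count n (x * prod_list xs)"
      using Cons.prems by (intro monomial_count_factor_exchange) auto
    have "(\<Sum>y\<leftarrow>x # xs. monomial_count n y)
          \<le> monomial_count n x + monomial_count n (prod_list xs) + (length xs - 1) * (n + 1)"
      using Cons False by simp
    also have "\<dots> \<le> monomial_count n (x * prod_list xs) + (n + 1) + (length xs - 1) * (n + 1)"
      using exchange by simp
    also have "\<dots> = monomial_count n (prod_list (x # xs)) + (length (x # xs) - 1) * (n + 1)"
    proof -
      obtain k where "length xs = Suc k" using False by (cases xs) auto
      then show ?thesis by simp
    qed
    finally show ?thesis .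
  qed
qed

lemma sum_monomial_count_le_factor:
  assumes "x * prod_list xs = p * q" "0 < p" "p \<le> x" "p \<le> prod_list xs"
    and "xs \<noteq> []" "\<forall>y\<in>set xs. y \<ge> 1"
  shows "(\<Sum>y\<leftarrow>x # xs. monomial_count n y)
           \<le> monomial_count n p + monomial_count n q + (length xs - 1) * (n + 1)"
proof -
  have "monomial_count n x + monomial_count n (prod_list xs) \<le> monomial_count n p + monomial_count n q"
    using assms(2-4,1) by (rule monomial_count_factor_exchange)
  moreover have "(\<Sum>y\<leftarrow>xs. monomial_count n y)
                 \<le> monomial_count n (prod_list xs) + (length xs - 1) * (n + 1)"
    using assms(5,6) by (rule sum_monomial_count_le_prod)
  ultimately show ?thesis by simp
qed

lemma dim_proj_product_Dvec:
  "dim_proj_product (Dvec n ds) + length ds = (\<Sum>x\<leftarrow>ds. monomial_count n x)"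
proof (induction ds)
  case Nil
  then show ?case by (simp add: dim_proj_product_def Dvec_def)
next
  case (Cons x ds)
  have "monomial_count n x \<ge> 1" by (simp add: monomial_count_def Suc_leI)
  with Cons show ?case by (simp add: dim_proj_product_def Dvec_def monomial_count_def)
qed

lemma min_prime:
  assumes "b \<ge> 2"
  shows "prime (min_prime b)" "min_prime b dvd b"
    and "\<And>x. x \<ge> 2 \<Longrightarrow> x dvd b \<Longrightarrow> min_prime b \<le> x"
proof -
  have "prime_factors b \<noteq> {}"
    using prime_factor_nat[of b] assms by (auto simp: prime_factors_dvd)
  then have "min_prime b \<in> prime_factors b"
    unfolding min_prime_def by simp
  then show "prime (min_prime b)" "min_prime b dvd b" by auto
  fix x assume "x \<ge> 2" "x dvd b"
  then obtain r where r: "prime r" "r dvd x" using prime_factor_nat[of x] by auto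
  then have "r \<in> prime_factors b"
    using \<open>x dvd b\<close> assms by (auto simp: prime_factors_dvd intro: dvd_trans)
  then have "min_prime b \<le> r" unfolding min_prime_def by simp
  also have "r \<le> x" using r \<open>x \<ge> 2\<close> by (simp add: dvd_imp_le)
  finally show "min_prime b \<le> x" .
qed

lemma degree_pattern_split:
  assumes "degree_pattern s d" "d \<noteq> dpat (delta d) s"
  obtains d1 rest where "d = d1 # rest" "d1 \<ge> 2" "prod_list rest \<ge> 2" "\<forall>x\<in>set rest. x \<ge> 1"
proof -
  obtain d1 rest where d: "d = d1 # rest"
    using assms(1) by (cases d) (auto simp: degree_pattern_def)
  have props: "d1 \<ge> 2" "\<forall>x\<in>set rest. x \<ge> 1" "length rest = s - 1"
    using assms(1) by (auto simp: degree_pattern_def d)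
  have "prod_list rest \<noteq> 1"
  proof
    assume "prod_list rest = 1"
    then have "\<forall>x\<in>set rest. x = 1" by (induction rest) auto
    then have "rest = replicate (s - 1) 1"
      using replicate_length_same[of rest 1] props(3) by simp
    with \<open>prod_list rest = 1\<close> have "d = dpat (delta d) s"
      by (simp add: d dpat_def delta_def)
    with assms(2) show False ..
  qed
  moreover have "prod_list rest \<ge> 1"
    using props(2) by (rule prod_list_ge_1)
  ultimately show thesis using that d props by simp
qed

theorem corollary5p2:
  fixes n s b :: nat and d :: "nat list"
  assumes "n \<ge> 2" and "1 \<le> s" and "s < n" and "b \<ge> 2"
    and "degree_pattern s d" and "d \<noteq> dpat b s" and "delta d = b"
  shows "int (dim_proj_product (Dvec n (dpat b s)))
           \<ge> int (dim_proj_product (Dvec n d)) + g n b"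
proof -
  obtain d1 rest where d: "d = d1 # rest" "d1 \<ge> 2" "prod_list rest \<ge> 2" "\<forall>x\<in>set rest. x \<ge> 1"
    using degree_pattern_split assms(5,6,7) by metis
  define p q where "p = min_prime b" and "q = b div p"
  have b: "b = d1 * prod_list rest" using assms(7) d by (simp add: delta_def)
  have "\<not> prime b"
    using d b prime_product[of d1 "prod_list rest"] by auto
  then have g_b: "g n b = int (monomial_count n b) - int (monomial_count n q) - int (monomial_count n p)"
    by (simp add: g_def monomial_count_def p_def q_def)
  have "prime p" "p dvd b" and p_min: "\<And>x. x \<ge> 2 \<Longrightarrow> x dvd b \<Longrightarrow> p \<le> x"
    using min_prime[OF assms(4)] by (simp_all add: p_def)
  then have "d1 * prod_list rest = p * q" using b by (simp add: q_def)
  then have "(\<Sum>x\<leftarrow>d. monomial_count n x)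
        \<le> monomial_count n p + monomial_count n q + (length rest - 1) * (n + 1)"
    unfolding d(1)
  proof (rule sum_monomial_count_le_factor)
    show "p \<le> d1" "p \<le> prod_list rest" using p_min d b by simp_all
  qed (use d \<open>prime p\<close> prime_gt_0_nat in auto)
  moreover have "length d = s" using assms(5) by (simp add: degree_pattern_def)
  then have "(length rest - 1) * (n + 1) \<le> (s - 1) * (n + 1)"
    using d(1) by (intro mult_le_mono1) auto
  moreover have "(\<Sum>x\<leftarrow>dpat b s. monomial_count n x) = monomial_count n b + (s - 1) * (n + 1)"
    by (simp add: dpat_def sum_list_replicate)
  moreover have "length (dpat b s) = s" using assms(2) by (simp add: dpat_def)
  ultimately show ?thesis
    using dim_proj_product_Dvec[of n d] dim_proj_product_Dvec[of n "dpat b s"] \<open>length d = s\<close> g_b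
    by linarith
qed

end
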